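(* There exist constants $\bar x^e,\bar u^e$, independent of $N$ and $W$, such that $\|x^e_t\|\le\bar x^e$ and $\|u^e_t\|\le\bar u^e$ for all $0\le t\le N-1$. Moreover, the states and controls of FOSS satisfy $\|x_t(0)\|\le\sqrt n\,\bar x^e$ for $0\le t\le N$ and $\|u_t(0)\|\le\sqrt n\,\bar u^e$ for $0\le t\le N-1$.
   Context: Setting: $(A,B)$ in canonical form (indices $0=k_0<k_1<\dots<k_m=n$, $\mathcal I=\{k_1,\dots,k_m\}$; rows $i\notin\mathcal I$ of $A$ equal $e_{i+1}^\top$; $j$-th column of $B$ is $e_{k_j}$; $A(\mathcal I,:)$ = rows of $A$ indexed by $\mathcal I$; $x^{\mathcal I}=(x^{k_1},\dots,x^{k_m})^\top$). Dynamics $x_{t+1}=Ax_t+Bu_t$, $x_0=0$. Standing assumptions: $f_t$ $\mu_f$-strongly convex and $l_f$-smooth, $g_t$ convex and $l_g$-smooth, minimizers $\theta_t$ of $f_t$ and $\xi_t$ of $g_t$ satisfy $\|\theta_t\|\le\bar\theta$, $\|\xi_t\|\le\bar\xi$ for all $t$. Optimal steady state $(x^e_t,u^e_t)=\arg\min\{f_t(x)+g_t(u):x=Ax+Bu\}$. FOSS: controller $u_t(0)=z_{t+1}(0)-A(\mathcal I,:)x_t(0)$ with $z_{t+1}(0)=(x^e_t)^{\mathcal I}$, $x_{t+1}(0)=Ax_t(0)+Bu_t(0)$, $x_0(0)=0$. *)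

theory Defs
  imports "HOL-Analysis.Analysis"
begin

text \<open>State space R^n = real^'n, input space R^m = real^'m. The index types are finite
and linearly ordered; this order is the order 1 < 2 < ... < n of coordinates.\<close>

text \<open>Canonical form of (A,B): k enumerates I = {k_1 < ... < k_m} with k_m = n;
rows of A not in I are e_{i+1}^T; the j-th column of B is e_{k_j}.\<close>
definition canonical_form ::
  "real^('n::{finite,linorder})^('n::{finite,linorder}) \<Rightarrow> real^('m::{finite,linorder})^('n::{finite,linorder}) \<Rightarrow> ('m \<Rightarrow> 'n) \<Rightarrow> bool" where
  "canonical_form A B k \<longleftrightarrow>
     strict_mono k \<and> k (Max UNIV) = Max UNIV \<and>
     (\<forall>i. i \<notin> range k \<longrightarrow> A $ i = axis (LEAST j. i < j) 1) \<and>
     (\<forall>j. column j B = axis (k j) 1)"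

definition rows_I :: "real^'n^'n \<Rightarrow> ('m \<Rightarrow> 'n) \<Rightarrow> real^'n^'m" where
  "rows_I A k = (\<chi> j. A $ k j)"

definition sel_I :: "real^'n \<Rightarrow> ('m \<Rightarrow> 'n) \<Rightarrow> real^'m" where
  "sel_I x k = (\<chi> j. x $ k j)"

definition strongly_convex :: "real \<Rightarrow> ('a::real_normed_vector \<Rightarrow> real) \<Rightarrow> bool" where
  "strongly_convex mu f \<longleftrightarrow>
     (\<forall>x y a. 0 \<le> a \<and> a \<le> 1 \<longrightarrow>
        f (a *\<^sub>R x + (1 - a) *\<^sub>R y) \<le> a * f x + (1 - a) * f y - mu / 2 * a * (1 - a) * (norm (x - y))\<^sup>2)"

definition smooth :: "real \<Rightarrow> ('a::real_inner \<Rightarrow> real) \<Rightarrow> bool" where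
  "smooth l f \<longleftrightarrow>
     (\<exists>G. (\<forall>x. (f has_derivative (\<lambda>h. G x \<bullet> h)) (at x)) \<and>
          (\<forall>x y. norm (G x - G y) \<le> l * norm (x - y)))"

primrec foss_x :: "real^'n^'n \<Rightarrow> real^'m^'n \<Rightarrow> ('m \<Rightarrow> 'n) \<Rightarrow> (nat \<Rightarrow> real^'n) \<Rightarrow> nat \<Rightarrow> real^'n" where
  "foss_x A B k xe 0 = 0"
| "foss_x A B k xe (Suc t) =
     A *v foss_x A B k xe t + B *v (sel_I (xe t) k - rows_I A k *v foss_x A B k xe t)"

definition foss_u :: "real^'n^'n \<Rightarrow> real^'m^'n \<Rightarrow> ('m \<Rightarrow> 'n) \<Rightarrow> (nat \<Rightarrow> real^'n) \<Rightarrow> nat \<Rightarrow> real^'m" where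
  "foss_u A B k xe t = sel_I (xe t) k - rows_I A k *v foss_x A B k xe t"

end

theory Submission imports Defs begin

(*
  The optimal steady state (x\<^sup>e\<^sub>t, u\<^sup>e\<^sub>t) minimises f\<^sub>t + g\<^sub>t over the steady-state subspace,
  which contains the origin. Comparing with (0, 0), smoothness bounds the excess of f\<^sub>t + g\<^sub>t
  at the origin over the unconstrained minima, and strong convexity turns this into a bound on
  the distance from x\<^sup>e\<^sub>t to \<theta>\<^sub>t that does not depend on t. In canonical form the FOSS
  dynamics only copy coordinates: coordinate k\<^sub>j of x\<^sub>t\<^sub>+\<^sub>1(0) is that of x\<^sup>e\<^sub>t, and every
  other coordinate i is coordinate i+1 of x\<^sub>t(0). So every coordinate of a FOSS state is a
  coordinate of an earlier steady state, and the inputs are then controlled through the fixed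
  matrix A(I,:).
*)

lemma smooth_le_minimum_plus:
  fixes f :: "'a::real_inner \<Rightarrow> real"
  assumes "smooth l f" and min: "\<forall>x. f \<theta> \<le> f x"
  shows "f y \<le> f \<theta> + \<bar>l\<bar> * (norm (y - \<theta>))\<^sup>2"
proof -
  obtain G where D: "\<And>x. (f has_derivative (\<lambda>h. G x \<bullet> h)) (at x)"
    and L: "\<And>x y. norm (G x - G y) \<le> l * norm (x - y)"
    using assms(1) unfolding smooth_def by blast
  define h where "h = y - \<theta>"
  define \<phi> where "\<phi> = (\<lambda>s. f (\<theta> + s *\<^sub>R h))"
  have D\<phi>: "(\<phi> has_real_derivative (G (\<theta> + s *\<^sub>R h) \<bullet> h)) (at s)" for s
  proof -
    have "((\<lambda>s. \<theta> + s *\<^sub>R h) has_derivative (\<lambda>s. s *\<^sub>R h)) (at s)"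
      by (auto intro!: derivative_eq_intros)
    from diff_chain_at[OF this D]
    have "(\<phi> has_derivative (\<lambda>r. (G (\<theta> + s *\<^sub>R h) \<bullet> h) * r)) (at s)"
      by (simp add: \<phi>_def o_def mult.commute)
    then show ?thesis
      by (simp add: has_field_derivative_def)
  qed
  have critical: "G \<theta> \<bullet> h = 0"
    using DERIV_local_min[OF D\<phi>[of 0], of 1] min by (simp add: \<phi>_def)
  obtain z where z: "0 < z" "z < 1" "\<phi> 1 - \<phi> 0 = G (\<theta> + z *\<^sub>R h) \<bullet> h"
    using MVT2[of 0 1 \<phi> "\<lambda>s. G (\<theta> + s *\<^sub>R h) \<bullet> h"] D\<phi> by auto
  have "G (\<theta> + z *\<^sub>R h) \<bullet> h = (G (\<theta> + z *\<^sub>R h) - G \<theta>) \<bullet> h"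
    using critical by (simp add: inner_diff_left)
  also have "\<dots> \<le> norm (G (\<theta> + z *\<^sub>R h) - G \<theta>) * norm h"
    by (rule norm_cauchy_schwarz)
  also have "\<dots> \<le> (l * norm (z *\<^sub>R h)) * norm h"
    using L[of "\<theta> + z *\<^sub>R h" \<theta>] by (intro mult_right_mono) auto
  also have "\<dots> = (l * z) * (norm h)\<^sup>2"
    using z by (simp add: power2_eq_square)
  also have "\<dots> \<le> \<bar>l\<bar> * (norm h)\<^sup>2"
  proof (rule mult_right_mono)
    have "l * z \<le> \<bar>l\<bar> * z"
      using z by (intro mult_right_mono) auto
    also have "\<dots> \<le> \<bar>l\<bar>"
      using z by (simp add: mult_left_le)
    finally show "l * z \<le> \<bar>l\<bar>" .
  qed simp
  finally show ?thesis
    using z by (simp add: \<phi>_def h_def)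
qed

lemma strongly_convex_minimum_plus_le:
  fixes f :: "'a::real_normed_vector \<Rightarrow> real"
  assumes "strongly_convex mu f" and min: "\<forall>x. f \<theta> \<le> f x"
  shows "f \<theta> + mu / 4 * (norm (y - \<theta>))\<^sup>2 \<le> f y"
proof -
  have "f ((1/2) *\<^sub>R y + (1 - 1/2) *\<^sub>R \<theta>)
          \<le> 1/2 * f y + (1 - 1/2) * f \<theta> - mu / 2 * (1/2) * (1 - 1/2) * (norm (y - \<theta>))\<^sup>2"
    using assms(1)[unfolded strongly_convex_def, rule_format, of "1/2" y \<theta>] by simp
  moreover have "f \<theta> \<le> f ((1/2) *\<^sub>R y + (1 - 1/2) *\<^sub>R \<theta>)"
    using min by blast
  ultimately show ?thesis by simp
qed

text \<open>The last hypothesis is all that is used of (x, u) minimising f + g over a set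
  containing the origin.\<close>

lemma constrained_minimiser_norm_le:
  fixes f :: "'a::real_inner \<Rightarrow> real" and g :: "'b::real_inner \<Rightarrow> real"
  assumes "mu > 0" "strongly_convex mu f" "smooth l\<^sub>f f" "smooth l\<^sub>g g"
    and min_f: "\<forall>x. f \<theta> \<le> f x" and min_g: "\<forall>u. g \<xi> \<le> g u"
    and "norm \<theta> \<le> \<theta>b" "norm \<xi> \<le> \<xi>b"
    and below_origin: "f x + g u \<le> f 0 + g 0"
  shows "norm x \<le> \<bar>\<theta>b\<bar> + sqrt (4 * (\<bar>l\<^sub>f\<bar> * \<theta>b\<^sup>2 + \<bar>l\<^sub>g\<bar> * \<xi>b\<^sup>2) / mu)"
proof -
  have "\<bar>l\<^sub>f\<bar> * (norm \<theta>)\<^sup>2 \<le> \<bar>l\<^sub>f\<bar> * \<theta>b\<^sup>2" "\<bar>l\<^sub>g\<bar> * (norm \<xi>)\<^sup>2 \<le> \<bar>l\<^sub>g\<bar> * \<xi>b\<^sup>2"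
    using assms(7,8) by (auto intro!: mult_left_mono power_mono)
  then have "f 0 \<le> f \<theta> + \<bar>l\<^sub>f\<bar> * \<theta>b\<^sup>2" "g 0 \<le> g \<xi> + \<bar>l\<^sub>g\<bar> * \<xi>b\<^sup>2"
    using smooth_le_minimum_plus[OF assms(3) min_f, of 0]
      smooth_le_minimum_plus[OF assms(4) min_g, of 0] by simp_all
  moreover have "f \<theta> + mu / 4 * (norm (x - \<theta>))\<^sup>2 \<le> f x"
    by (rule strongly_convex_minimum_plus_le[OF assms(2) min_f])
  ultimately have "mu / 4 * (norm (x - \<theta>))\<^sup>2 \<le> \<bar>l\<^sub>f\<bar> * \<theta>b\<^sup>2 + \<bar>l\<^sub>g\<bar> * \<xi>b\<^sup>2"
    using below_origin min_g[rule_format, of u] by linarith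
  then have "norm (x - \<theta>) \<le> sqrt (4 * (\<bar>l\<^sub>f\<bar> * \<theta>b\<^sup>2 + \<bar>l\<^sub>g\<bar> * \<xi>b\<^sup>2) / mu)"
    using \<open>mu > 0\<close> by (intro real_le_rsqrt) (simp add: field_simps)
  moreover have "norm x \<le> norm \<theta> + norm (x - \<theta>)"
    using norm_triangle_ineq[of \<theta> "x - \<theta>"] by simp
  ultimately show ?thesis
    using assms(7) by linarith
qed

lemma canonical_form_B_entry:
  assumes "canonical_form A B k"
  shows "B $ i $ j = (if i = k j then 1 else 0)"
proof -
  have "column j B $ i = axis (k j) 1 $ i"
    using assms unfolding canonical_form_def by simp
  then show ?thesis by (simp add: column_def axis_def)
qed

lemma canonical_form_mult_B_input_coord:
  assumes "canonical_form A B k"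
  shows "(B *v v) $ k j = v $ j"
proof -
  have "inj k"
    using assms unfolding canonical_form_def by (simp add: strict_mono_imp_inj_on)
  then have "(B *v v) $ k j = (\<Sum>j'\<in>UNIV. if j' = j then v $ j' else 0)"
    unfolding matrix_vector_mult_def vec_lambda_beta
    by (intro sum.cong) (auto simp: canonical_form_B_entry[OF assms] inj_eq)
  then show ?thesis by simp
qed

lemma canonical_form_mult_B_other_coord:
  assumes "canonical_form A B k" "i \<notin> range k"
  shows "(B *v v) $ i = 0"
  unfolding matrix_vector_mult_def
  using assms(2) by (auto simp: canonical_form_B_entry[OF assms(1)] intro!: sum.neutral)

lemma canonical_form_mult_A_other_coord:
  assumes "canonical_form A B k" "i \<notin> range k"
  shows "(A *v x) $ i = x $ (LEAST j. i < j)"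
proof -
  have "A $ i = axis (LEAST j. i < j) 1"
    using assms unfolding canonical_form_def by blast
  then show ?thesis
    unfolding matrix_vector_mult_def
    by (simp add: axis_def if_distrib[of "\<lambda>c. c * _"] cong: if_cong)
qed

lemma rows_I_mult: "(rows_I A k *v x) $ j = (A *v x) $ k j"
  by (simp add: rows_I_def matrix_vector_mult_def)

lemma canonical_form_steady_state_input:
  assumes "canonical_form A B k" "x = A *v x + B *v u"
  shows "u = sel_I x k - rows_I A k *v x"
proof -
  have "u $ j = x $ k j - (A *v x) $ k j" for j
    using arg_cong[OF assms(2), of "\<lambda>v. v $ k j"]
    by (simp add: canonical_form_mult_B_input_coord[OF assms(1)])
  then show ?thesis by (simp add: vec_eq_iff sel_I_def rows_I_mult)
qed

lemma foss_x_Suc_coord: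
  assumes "canonical_form A B k"
  shows "foss_x A B k xe (Suc t) $ i =
           (if i \<in> range k then xe t $ i else foss_x A B k xe t $ (LEAST j. i < j))"
proof (cases "i \<in> range k")
  case True
  then obtain j where "i = k j" by auto
  then show ?thesis
    by (simp add: canonical_form_mult_B_input_coord[OF assms] sel_I_def rows_I_mult)
next
  case False
  then show ?thesis
    by (simp add: canonical_form_mult_B_other_coord[OF assms]
        canonical_form_mult_A_other_coord[OF assms])
qed

lemma foss_x_coord_bound:
  assumes "canonical_form A B k" "0 \<le> R" "\<And>s i. s < t \<Longrightarrow> \<bar>xe s $ i\<bar> \<le> R"
  shows "\<bar>foss_x A B k xe t $ i\<bar> \<le> R"
  using assms(3)
proof (induction t arbitrary: i)
  case 0
  then show ?case using \<open>0 \<le> R\<close> by simp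
next
  case (Suc t)
  then show ?case
    unfolding foss_x_Suc_coord[OF assms(1)] by auto
qed

lemma norm_le_sqrt_card_if_coords_le:
  fixes v :: "real^'n"
  assumes "\<And>i. \<bar>v $ i\<bar> \<le> R"
  shows "norm v \<le> sqrt (real CARD('n)) * R"
proof -
  have "norm v \<le> L2_set (\<lambda>i. R) (UNIV :: 'n set)"
    unfolding norm_vec_def using assms by (intro L2_set_mono) (auto simp: real_norm_def)
  also have "\<dots> = sqrt (real CARD('n)) * R"
    using assms[of undefined] by (simp add: L2_set_constant)
  finally show ?thesis .
qed

lemma matrix_vector_mult_coord_le:
  fixes M :: "real^'n^'m"
  assumes "\<And>i. \<bar>v $ i\<bar> \<le> R"
  shows "\<bar>(M *v v) $ j\<bar> \<le> (\<Sum>p\<in>UNIV. \<Sum>q\<in>UNIV. \<bar>M $ p $ q\<bar>) * R"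
proof -
  have "\<bar>(M *v v) $ j\<bar> \<le> (\<Sum>q\<in>UNIV. \<bar>M $ j $ q\<bar> * \<bar>v $ q\<bar>)"
    unfolding matrix_vector_mult_def vec_lambda_beta
    by (rule order_trans[OF sum_abs]) (simp add: abs_mult)
  also have "\<dots> \<le> (\<Sum>q\<in>UNIV. \<bar>M $ j $ q\<bar>) * R"
    unfolding sum_distrib_right by (intro sum_mono mult_left_mono assms) auto
  also have "\<dots> \<le> (\<Sum>p\<in>UNIV. \<Sum>q\<in>UNIV. \<bar>M $ p $ q\<bar>) * R"
    using assms[of undefined]
    by (intro mult_right_mono member_le_sum[where f = "\<lambda>p. \<Sum>q\<in>UNIV. \<bar>M $ p $ q\<bar>"])
       (auto intro: sum_nonneg)
  finally show ?thesis .
qed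

lemma norm_feedback_input_le:
  fixes x w :: "real^'n" and M :: "real^'n^'m"
  assumes "\<And>i. \<bar>x $ i\<bar> \<le> R" "\<And>i. \<bar>w $ i\<bar> \<le> R"
  shows "norm (sel_I x k - M *v w)
           \<le> sqrt (real CARD('m)) * ((1 + (\<Sum>p\<in>UNIV. \<Sum>q\<in>UNIV. \<bar>M $ p $ q\<bar>)) * R)"
proof (rule norm_le_sqrt_card_if_coords_le)
  fix j
  have "\<bar>(M *v w) $ j\<bar> \<le> (\<Sum>p\<in>UNIV. \<Sum>q\<in>UNIV. \<bar>M $ p $ q\<bar>) * R"
    by (rule matrix_vector_mult_coord_le[OF assms(2)])
  then show "\<bar>(sel_I x k - M *v w) $ j\<bar> \<le> (1 + (\<Sum>p\<in>UNIV. \<Sum>q\<in>UNIV. \<bar>M $ p $ q\<bar>)) * R"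
    using assms(1)[of "k j"] by (simp add: sel_I_def algebra_simps)
qed

theorem lemma4:
  fixes A :: "real^('n::{finite,linorder})^('n::{finite,linorder})"
    and B :: "real^('m::{finite,linorder})^('n::{finite,linorder})"
    and k :: "'m \<Rightarrow> 'n"
    and mu_f l_f l_g theta_bar xi_bar :: real
  assumes "canonical_form A B k"
    and "mu_f > 0"
  shows "\<exists>xe_bar ue_bar :: real.
     \<forall>(N::nat) (f :: nat \<Rightarrow> real^('n::{finite,linorder}) \<Rightarrow> real) (g :: nat \<Rightarrow> real^('m::{finite,linorder}) \<Rightarrow> real)
       (theta :: nat \<Rightarrow> real^('n::{finite,linorder})) (xi :: nat \<Rightarrow> real^('m::{finite,linorder}))
       (xe :: nat \<Rightarrow> real^('n::{finite,linorder})) (ue :: nat \<Rightarrow> real^('m::{finite,linorder})).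
       (\<forall>t<N. strongly_convex mu_f (f t) \<and> smooth l_f (f t) \<and>
              convex_on UNIV (g t) \<and> smooth l_g (g t) \<and>
              (\<forall>x. f t (theta t) \<le> f t x) \<and> (\<forall>u. g t (xi t) \<le> g t u) \<and>
              norm (theta t) \<le> theta_bar \<and> norm (xi t) \<le> xi_bar \<and>
              xe t = A *v xe t + B *v ue t \<and>
              (\<forall>x u. x = A *v x + B *v u \<longrightarrow> f t (xe t) + g t (ue t) \<le> f t x + g t u))
       \<longrightarrow> (\<forall>t<N. norm (xe t) \<le> xe_bar \<and> norm (ue t) \<le> ue_bar) \<and>
           (\<forall>t\<le>N. norm (foss_x A B k xe t) \<le> sqrt (real CARD('n)) * xe_bar) \<and>
           (\<forall>t<N. norm (foss_u A B k xe t) \<le> sqrt (real CARD('n)) * ue_bar)"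
proof -
  define R where "R = \<bar>theta_bar\<bar> + sqrt (4 * (\<bar>l_f\<bar> * theta_bar\<^sup>2 + \<bar>l_g\<bar> * xi_bar\<^sup>2) / mu_f)"
  define U where
    "U = sqrt (real CARD('m)) * ((1 + (\<Sum>p\<in>UNIV. \<Sum>q\<in>UNIV. \<bar>rows_I A k $ p $ q\<bar>)) * R)"
  have "0 \<le> R"
    unfolding R_def using \<open>mu_f > 0\<close> by simp
  then have "0 \<le> U"
    unfolding U_def by (simp add: sum_nonneg)
  then have "U \<le> sqrt (real CARD('n)) * U"
    using mult_right_mono[of 1 "sqrt (real CARD('n))" U] by simp
  show ?thesis
  proof (rule exI[of _ R], rule exI[of _ U], intro allI impI, goal_cases)
    case (1 N f g theta xi xe ue)
    have xe: "norm (xe t) \<le> R" if "t < N" for t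
      unfolding R_def using 1 that \<open>mu_f > 0\<close>
      by (intro constrained_minimiser_norm_le[where f = "f t" and g = "g t" and x = "xe t" and u = "ue t"]) auto
    then have xe_coord: "\<bar>xe t $ i\<bar> \<le> R" if "t < N" for t i
      using component_le_norm_cart[of "xe t" i] that by fastforce
    have foss_coord: "\<bar>foss_x A B k xe t $ i\<bar> \<le> R" if "t \<le> N" for t i
      using that xe_coord by (intro foss_x_coord_bound[OF assms(1) \<open>0 \<le> R\<close>]) auto
    have "norm (ue t) \<le> U" if "t < N" for t
    proof -
      have "ue t = sel_I (xe t) k - rows_I A k *v xe t"
        using 1 that by (intro canonical_form_steady_state_input[OF assms(1)]) auto
      then show ?thesis
        unfolding U_def using xe_coord that by (auto intro: norm_feedback_input_le)
    qed
    moreover have "norm (foss_u A B k xe t) \<le> U" if "t < N" for t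
      unfolding foss_u_def U_def using xe_coord foss_coord that
      by (auto intro: norm_feedback_input_le)
    moreover have "norm (foss_x A B k xe t) \<le> sqrt (real CARD('n)) * R" if "t \<le> N" for t
      using foss_coord[OF that] by (rule norm_le_sqrt_card_if_coords_le)
    ultimately show ?case
      using xe \<open>U \<le> sqrt (real CARD('n)) * U\<close> by (auto intro: order_trans)
  qed
qed

end
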